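(* Let $n\ge 5$. Then no subset $R\subseteq V_2$ of size $n-2$ such that any two distinct vertices of $R$ are at distance $2$ in $H(n)$ is a doubly resolving set of $H(n)$.
   Context: For $n\ge 5$, $H(n)$ is the graph with vertex set $V_1\cup V_2$, where $V_1=\{v_1,\dots,v_n\}$ and $V_2=\{v_iv_j: 1\le i<j\le n\}$ (each $v_iv_j$ a single vertex), and where $v_r\in V_1$ is adjacent to $v_iv_j\in V_2$ iff $r=i$ or $r=j$; there are no other edges. $d(u,v)$ is the shortest-path distance. For an ordered set $Q=\{q_1,\dots,q_l\}$ of vertices, $r(x|Q)=(d(x,q_1),\dots,d(x,q_l))$. $Q$ is a doubly resolving set of a graph $G$ if for any two distinct vertices $x,y$ of $G$, $r(x|Q)-r(y|Q)\neq\lambda(1,\dots,1)$ for every integer $\lambda$. *)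

theory Defs
  imports Main
begin

definition is_walk :: "'a set \<Rightarrow> ('a \<Rightarrow> 'a \<Rightarrow> bool) \<Rightarrow> 'a list \<Rightarrow> bool" where
  "is_walk V adj xs \<longleftrightarrow> xs \<noteq> [] \<and> set xs \<subseteq> V \<and>
     (\<forall>i. Suc i < length xs \<longrightarrow> adj (xs ! i) (xs ! Suc i))"

definition gdist :: "'a set \<Rightarrow> ('a \<Rightarrow> 'a \<Rightarrow> bool) \<Rightarrow> 'a \<Rightarrow> 'a \<Rightarrow> nat" where
  "gdist V adj x y = (LEAST k. \<exists>xs. is_walk V adj xs \<and> hd xs = x \<and> last xs = y \<and> length xs = Suc k)"

definition doubly_resolving :: "'a set \<Rightarrow> ('a \<Rightarrow> 'a \<Rightarrow> bool) \<Rightarrow> 'a set \<Rightarrow> bool" where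
  "doubly_resolving V adj Q \<longleftrightarrow> Q \<subseteq> V \<and>
     (\<forall>x\<in>V. \<forall>y\<in>V. x \<noteq> y \<longrightarrow>
        \<not> (\<exists>c::int. \<forall>q\<in>Q. int (gdist V adj x q) - int (gdist V adj y q) = c))"

datatype hvert = V1 nat | V2 nat nat  \<comment> \<open>V2 i j stands for the vertex v_i v_j, with i < j\<close>

definition HV1 :: "nat \<Rightarrow> hvert set" where
  "HV1 n = {V1 r | r. 1 \<le> r \<and> r \<le> n}"

definition HV2 :: "nat \<Rightarrow> hvert set" where
  "HV2 n = {V2 i j | i j. 1 \<le> i \<and> i < j \<and> j \<le> n}"

definition HV :: "nat \<Rightarrow> hvert set" where
  "HV n = HV1 n \<union> HV2 n"

fun Hadj :: "hvert \<Rightarrow> hvert \<Rightarrow> bool" where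
  "Hadj (V1 r) (V2 i j) = (r = i \<or> r = j)"
| "Hadj (V2 i j) (V1 r) = (r = i \<or> r = j)"
| "Hadj _ _ = False"

abbreviation Hdist :: "nat \<Rightarrow> hvert \<Rightarrow> hvert \<Rightarrow> nat" where
  "Hdist n \<equiv> gdist (HV n) Hadj"

end

theory Submission
  imports Defs
begin

text \<open>Two vertices of \<open>V\<^sub>2\<close> are at distance 2 exactly when the pairs they stand for
  meet, so \<open>R\<close> is a pairwise intersecting family of 2-subsets of \<open>{1..n}\<close>. Such a family
  is either a star (all pairs contain a common \<open>c\<close>) or lies inside a 3-set \<open>T\<close>.
  For a star, \<open>|R| = n - 2 < n - 1\<close> leaves some pair \<open>{c, u}\<close> outside \<open>R\<close>, and then
  \<open>v\<^sub>c\<close> and \<open>v\<^sub>cv\<^sub>u\<close> are at distances 1 and 2 from every member of \<open>R\<close>. Inside a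
  3-set, \<open>n \<ge> 5\<close> gives two points \<open>d, e\<close> outside \<open>T\<close>, and \<open>v\<^sub>d\<close>, \<open>v\<^sub>e\<close> are both
  at distance 3 from every member of \<open>R\<close>.\<close>

lemma is_walk_singleton [simp]: "is_walk V adj [x] \<longleftrightarrow> x \<in> V"
  by (simp add: is_walk_def)

lemma is_walk_Cons_Cons [simp]:
  "is_walk V adj (x # y # xs) \<longleftrightarrow> x \<in> V \<and> adj x y \<and> is_walk V adj (y # xs)"
  by (auto simp: is_walk_def nth_Cons split: nat.splits)

lemma gdist_le_walk:
  assumes "is_walk V adj xs"
  shows "gdist V adj (hd xs) (last xs) \<le> length xs - 1"
proof -
  have "length xs = Suc (length xs - 1)"
    using assms by (cases xs) (auto simp: is_walk_def)
  then show ?thesis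
    unfolding gdist_def using assms by (intro Least_le) auto
qed

lemma gdist_shortest_walk:
  assumes "is_walk V adj xs"
  obtains ws where "is_walk V adj ws" "hd ws = hd xs" "last ws = last xs"
    "length ws = Suc (gdist V adj (hd xs) (last xs))"
proof -
  have "length xs = Suc (length xs - 1)"
    using assms by (cases xs) (auto simp: is_walk_def)
  then have "\<exists>k ws. is_walk V adj ws \<and> hd ws = hd xs \<and> last ws = last xs \<and> length ws = Suc k"
    using assms by blast
  from LeastI_ex[OF this] show thesis
    using that unfolding gdist_def by blast
qed

text \<open>The walk \<open>xs\<close> only witnesses reachability: without it the \<open>LEAST\<close> in
  \<open>gdist\<close> ranges over an empty set.\<close>

lemma gdist_eq_0D:
  assumes "is_walk V adj xs" "gdist V adj (hd xs) (last xs) = 0"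
  shows "hd xs = last xs"
proof -
  obtain ws where "is_walk V adj ws" "hd ws = hd xs" "last ws = last xs"
    "length ws = Suc (gdist V adj (hd xs) (last xs))"
    using gdist_shortest_walk[OF assms(1)] .
  then show ?thesis
    using assms(2) by (auto simp: length_Suc_conv numeral_eq_Suc)
qed

lemma gdist_eq_1D:
  assumes "is_walk V adj xs" "gdist V adj (hd xs) (last xs) = 1"
  shows "adj (hd xs) (last xs)"
proof -
  obtain ws where "is_walk V adj ws" "hd ws = hd xs" "last ws = last xs"
    "length ws = Suc (gdist V adj (hd xs) (last xs))"
    using gdist_shortest_walk[OF assms(1)] .
  then show ?thesis
    using assms(2) by (auto simp: length_Suc_conv numeral_eq_Suc)
qed

lemma gdist_eq_2D:
  assumes "is_walk V adj xs" "gdist V adj (hd xs) (last xs) = 2"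
  shows "\<exists>z. adj (hd xs) z \<and> adj z (last xs)"
proof -
  obtain ws where "is_walk V adj ws" "hd ws = hd xs" "last ws = last xs"
    "length ws = Suc (gdist V adj (hd xs) (last xs))"
    using gdist_shortest_walk[OF assms(1)] .
  then show ?thesis
    using assms(2) by (auto simp: length_Suc_conv numeral_eq_Suc)
qed

lemma not_doubly_resolvingI:
  assumes "x \<in> V" "y \<in> V" "x \<noteq> y"
    and "\<And>q. q \<in> Q \<Longrightarrow> int (gdist V adj x q) - int (gdist V adj y q) = c"
  shows "\<not> doubly_resolving V adj Q"
  using assms unfolding doubly_resolving_def by blast

lemma intersecting_doubletons_star_or_triangle:
  fixes F :: "'a set set"
  assumes card_2: "\<And>A. A \<in> F \<Longrightarrow> card A = 2"
    and intersecting: "\<And>A B. A \<in> F \<Longrightarrow> B \<in> F \<Longrightarrow> A \<noteq> B \<Longrightarrow> A \<inter> B \<noteq> {}"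
  obtains (star) c where "\<And>A. A \<in> F \<Longrightarrow> c \<in> A"
    | (triangle) T where "card T = 3" "\<And>A. A \<in> F \<Longrightarrow> A \<subseteq> T"
proof (cases "\<exists>c. \<forall>A\<in>F. c \<in> A")
  case True
  then show thesis using star by blast
next
  case False
  then have avoid: "\<exists>A\<in>F. x \<notin> A" for x
    by blast
  have meets: "A \<inter> B \<noteq> {}" if "A \<in> F" "B \<in> F" for A B
    using intersecting[OF that] card_2[OF that(2)] by (cases "A = B") auto
  obtain A1 where A1: "A1 \<in> F"
    using avoid by blast
  then obtain a b where ab: "A1 = {a, b}" "a \<noteq> b"
    using card_2 by (meson card_2_iff)
  obtain A2 where A2: "A2 \<in> F" "a \<notin> A2"
    using avoid by blast
  then obtain c where c: "A2 = {b, c}" "c \<noteq> b" "c \<noteq> a"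
    using meets[OF A2(1) A1] card_2[OF A2(1)] ab by (auto simp: card_2_iff doubleton_eq_iff)
  obtain A3 where A3: "A3 \<in> F" "b \<notin> A3"
    using avoid by blast
  then have A3_eq: "A3 = {a, c}"
    using meets[OF A3(1) A1] meets[OF A3(1) A2(1)] card_2[OF A3(1)] ab c
    by (auto simp: card_2_iff)
  show thesis
  proof (rule triangle)
    show "card {a, b, c} = 3"
      using ab c by simp
    show "A \<subseteq> {a, b, c}" if "A \<in> F" for A
      using meets[OF that A1] meets[OF that A2(1)] meets[OF that A3(1)] card_2[OF that]
        ab c A3_eq by (auto simp: card_2_iff)
  qed
qed

definition endpoints :: "hvert \<Rightarrow> nat set" where
  "endpoints q = (case q of V1 r \<Rightarrow> {} | V2 i j \<Rightarrow> {i, j})"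

lemma endpoints_simps [simp]:
  "endpoints (V1 r) = {}"
  "endpoints (V2 i j) = {i, j}"
  by (simp_all add: endpoints_def)

lemma finite_endpoints [simp]: "finite (endpoints q)"
  by (cases q) simp_all

lemma Hadj_V1_left [simp]: "Hadj (V1 r) q \<longleftrightarrow> r \<in> endpoints q"
  by (cases q) auto

lemma Hadj_V1_right [simp]: "Hadj q (V1 r) \<longleftrightarrow> r \<in> endpoints q"
  by (cases q) auto

lemma Hadj_HV2D:
  assumes "Hadj z q" "q \<in> HV2 n"
  shows "\<exists>r. z = V1 r \<and> r \<in> endpoints q"
  using assms by (cases z) (auto simp: HV2_def)

lemma V1_in_HV: "r \<in> {1..n} \<Longrightarrow> V1 r \<in> HV n"
  by (auto simp: HV_def HV1_def)

lemma HV2_into_HV: "q \<in> HV2 n \<Longrightarrow> q \<in> HV n"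
  by (simp add: HV_def)

lemma V1_notin_HV2 [simp]: "V1 r \<notin> HV2 n"
  by (auto simp: HV2_def)

lemma finite_HV2: "finite (HV2 n)"
proof (rule finite_subset)
  show "HV2 n \<subseteq> case_prod V2 ` ({1..n} \<times> {1..n})"
    by (auto simp: HV2_def)
qed simp

lemma card_endpoints: "q \<in> HV2 n \<Longrightarrow> card (endpoints q) = 2"
  by (auto simp: HV2_def)

lemma endpoints_subset: "q \<in> HV2 n \<Longrightarrow> endpoints q \<subseteq> {1..n}"
  by (auto simp: HV2_def)

lemma V1_endpoint_in_HV: "q \<in> HV2 n \<Longrightarrow> r \<in> endpoints q \<Longrightarrow> V1 r \<in> HV n"
  using endpoints_subset V1_in_HV by blast

lemma ex_HV2_endpoints:
  assumes "a \<in> {1..n}" "b \<in> {1..n}" "a \<noteq> b"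
  shows "\<exists>p\<in>HV2 n. endpoints p = {a, b}"
proof
  show "V2 (min a b) (max a b) \<in> HV2 n"
    using assms by (auto simp: HV2_def min_def max_def)
  show "endpoints (V2 (min a b) (max a b)) = {a, b}"
    by (auto simp: min_def max_def)
qed

lemma Hdist_V1_endpoint:
  assumes "q \<in> HV2 n" "r \<in> endpoints q"
  shows "Hdist n (V1 r) q = 1"
proof -
  have walk: "is_walk (HV n) Hadj [V1 r, q]"
    using assms by (simp add: V1_endpoint_in_HV HV2_into_HV)
  have "Hdist n (V1 r) q \<le> 1"
    using gdist_le_walk[OF walk] by simp
  moreover have "Hdist n (V1 r) q \<noteq> 0"
    using gdist_eq_0D[OF walk] assms(1) V1_notin_HV2 by fastforce
  ultimately show ?thesis
    by linarith
qed

lemma Hdist_V1_non_endpoint: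
  assumes "q \<in> HV2 n" "r \<in> {1..n}" "r \<notin> endpoints q"
  shows "Hdist n (V1 r) q = 3"
proof -
  obtain i where i: "i \<in> endpoints q"
    using card_endpoints[OF assms(1)] by fastforce
  then have "i \<in> {1..n}" "i \<noteq> r"
    using assms endpoints_subset by blast+
  then obtain p where p: "p \<in> HV2 n" "endpoints p = {r, i}"
    using ex_HV2_endpoints assms(2) by metis
  have walk: "is_walk (HV n) Hadj [V1 r, p, V1 i, q]"
    using assms i p by (simp add: V1_in_HV V1_endpoint_in_HV HV2_into_HV)
  have "Hdist n (V1 r) q \<le> 3"
    using gdist_le_walk[OF walk] by simp
  moreover have "Hdist n (V1 r) q \<noteq> 0"
    using gdist_eq_0D[OF walk] assms(1) V1_notin_HV2 by fastforce
  moreover have "Hdist n (V1 r) q \<noteq> 1"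
    using gdist_eq_1D[OF walk] assms(3) by auto
  moreover have "Hdist n (V1 r) q \<noteq> 2"
    using gdist_eq_2D[OF walk] Hadj_HV2D[OF _ assms(1)] by fastforce
  ultimately show ?thesis
    by linarith
qed

lemma Hdist_V2_common_endpoint:
  assumes "q \<in> HV2 n" "q' \<in> HV2 n" "q \<noteq> q'" "c \<in> endpoints q" "c \<in> endpoints q'"
  shows "Hdist n q q' = 2"
proof -
  have walk: "is_walk (HV n) Hadj [q, V1 c, q']"
    using assms by (simp add: V1_endpoint_in_HV HV2_into_HV)
  have "Hdist n q q' \<le> 2"
    using gdist_le_walk[OF walk] by simp
  moreover have "Hdist n q q' \<noteq> 0"
    using gdist_eq_0D[OF walk] assms(3) by auto
  moreover have "Hdist n q q' \<noteq> 1"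
    using gdist_eq_1D[OF walk] Hadj_HV2D[OF _ assms(2)] assms(1) by fastforce
  ultimately show ?thesis
    by linarith
qed

lemma Hdist_V2_eq_2D:
  assumes "q \<in> HV2 n" "q' \<in> HV2 n" "Hdist n q q' = 2"
  shows "endpoints q \<inter> endpoints q' \<noteq> {}"
proof
  assume disjoint: "endpoints q \<inter> endpoints q' = {}"
  obtain i i' where i: "i \<in> endpoints q" "i' \<in> endpoints q'"
    using card_endpoints assms(1,2) by (metis all_not_in_conv card.empty zero_neq_numeral)
  then have "i \<in> {1..n}" "i' \<in> {1..n}" "i \<noteq> i'"
    using assms(1,2) endpoints_subset disjoint by blast+
  then obtain p where p: "p \<in> HV2 n" "endpoints p = {i, i'}"
    using ex_HV2_endpoints by metis
  have walk: "is_walk (HV n) Hadj [q, V1 i, p, V1 i', q']"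
    using assms i p by (simp add: V1_endpoint_in_HV HV2_into_HV)
  show False
    using gdist_eq_2D[OF walk] assms(3) Hadj_HV2D[OF _ assms(2)] disjoint by fastforce
qed

lemma endpoints_intersecting:
  assumes "R \<subseteq> HV2 n" "\<forall>a\<in>R. \<forall>b\<in>R. a \<noteq> b \<longrightarrow> Hdist n a b = 2"
    and "A \<in> endpoints ` R" "B \<in> endpoints ` R" "A \<noteq> B"
  shows "A \<inter> B \<noteq> {}"
proof -
  obtain a b where ab: "a \<in> R" "b \<in> R" "A = endpoints a" "B = endpoints b"
    using assms(3,4) by blast
  with \<open>A \<noteq> B\<close> have "Hdist n a b = 2"
    using assms(2) by auto
  moreover have "a \<in> HV2 n" "b \<in> HV2 n"
    using ab(1,2) assms(1) by auto
  ultimately show ?thesis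
    using ab(3,4) Hdist_V2_eq_2D by simp
qed

lemma not_doubly_resolving_star:
  assumes R: "R \<subseteq> HV2 n" "R \<noteq> {}" "card R + 2 \<le> n"
    and centre: "\<And>q. q \<in> R \<Longrightarrow> c \<in> endpoints q"
  shows "\<not> doubly_resolving (HV n) Hadj R"
proof -
  have fin: "finite R"
    using finite_subset[OF R(1) finite_HV2] .
  have c: "c \<in> {1..n}"
    using R(1,2) centre endpoints_subset by blast
  define partners where "partners = (\<Union>q\<in>R. endpoints q - {c})"
  have "card partners \<le> (\<Sum>q\<in>R. card (endpoints q - {c}))"
    unfolding partners_def using fin by (rule card_UN_le)
  also have "\<dots> = (\<Sum>q\<in>R. 1)"
  proof (rule sum.cong)
    show "card (endpoints q - {c}) = 1" if "q \<in> R" for q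
      using card_endpoints[of q n] centre[OF that] R(1) that by auto
  qed simp
  finally have "card partners < card ({1..n} - {c})"
    using c R(3) by simp
  moreover have "finite partners"
    by (simp add: partners_def fin)
  ultimately have "\<not> {1..n} - {c} \<subseteq> partners"
    by (meson card_mono leD)
  then obtain u where u: "u \<in> {1..n}" "u \<noteq> c" "u \<notin> partners"
    by blast
  then obtain p where p: "p \<in> HV2 n" "endpoints p = {c, u}"
    using ex_HV2_endpoints c by metis
  have "p \<notin> R"
    using p u unfolding partners_def by blast
  have "int (Hdist n (V1 c) q) - int (Hdist n p q) = -1" if "q \<in> R" for q
  proof -
    have "q \<in> HV2 n" "p \<noteq> q"
      using that R(1) \<open>p \<notin> R\<close> by auto
    moreover have "c \<in> endpoints p" "c \<in> endpoints q"
      using p(2) centre[OF that] by auto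
    ultimately have "Hdist n (V1 c) q = 1" "Hdist n p q = 2"
      by (simp_all add: Hdist_V1_endpoint Hdist_V2_common_endpoint[OF p(1)])
    then show ?thesis
      by simp
  qed
  moreover have "V1 c \<in> HV n" "p \<in> HV n" "V1 c \<noteq> p"
    using c p(1) V1_in_HV HV2_into_HV by auto
  ultimately show ?thesis
    by (intro not_doubly_resolvingI)
qed

lemma not_doubly_resolving_triangle:
  assumes R: "R \<subseteq> HV2 n" and T: "finite T" "card T + 2 \<le> n"
    and inside: "\<And>q. q \<in> R \<Longrightarrow> endpoints q \<subseteq> T"
  shows "\<not> doubly_resolving (HV n) Hadj R"
proof -
  have "2 \<le> card ({1..n} - T)"
    using diff_card_le_card_Diff[of T "{1..n}"] T by simp
  then obtain D where "D \<subseteq> {1..n} - T" "card D = 2"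
    by (rule obtain_subset_with_card_n)
  then obtain d e where de: "d \<in> {1..n} - T" "e \<in> {1..n} - T" "d \<noteq> e"
    by (auto simp: card_2_iff)
  have "int (Hdist n (V1 d) q) - int (Hdist n (V1 e) q) = 0" if "q \<in> R" for q
  proof -
    have "q \<in> HV2 n" "d \<notin> endpoints q" "e \<notin> endpoints q"
      using that R inside[OF that] de by auto
    then have "Hdist n (V1 d) q = 3" "Hdist n (V1 e) q = 3"
      using de by (simp_all add: Hdist_V1_non_endpoint)
    then show ?thesis
      by simp
  qed
  moreover have "V1 d \<in> HV n" "V1 e \<in> HV n" "V1 d \<noteq> V1 e"
    using de V1_in_HV by auto
  ultimately show ?thesis
    by (intro not_doubly_resolvingI)
qed

theorem proposition3p2:
  fixes n :: nat and R :: "hvert set"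
  assumes "n \<ge> 5"
    and "R \<subseteq> HV2 n"
    and "card R = n - 2"
    and "\<forall>a\<in>R. \<forall>b\<in>R. a \<noteq> b \<longrightarrow> Hdist n a b = 2"
  shows "\<not> doubly_resolving (HV n) Hadj R"
proof -
  have pairs: "card A = 2" if "A \<in> endpoints ` R" for A
    using that assms(2) card_endpoints by auto
  have intersecting: "A \<inter> B \<noteq> {}"
    if "A \<in> endpoints ` R" "B \<in> endpoints ` R" "A \<noteq> B" for A B
    using assms(2,4) that by (rule endpoints_intersecting)
  show ?thesis
  proof (rule intersecting_doubletons_star_or_triangle[OF pairs intersecting])
    fix c
    assume "\<And>A. A \<in> endpoints ` R \<Longrightarrow> c \<in> A"
    moreover have "R \<noteq> {}" "card R + 2 \<le> n"
      using assms(1,3) by auto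
    ultimately show ?thesis
      by (intro not_doubly_resolving_star[where c = c, OF assms(2)]) auto
  next
    fix T
    assume "card T = 3" "\<And>A. A \<in> endpoints ` R \<Longrightarrow> A \<subseteq> T"
    moreover have "finite T"
      using \<open>card T = 3\<close> by (simp add: card_ge_0_finite)
    ultimately show ?thesis
      using assms(1) by (intro not_doubly_resolving_triangle[OF assms(2)]) auto
  qed
qed

end
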